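(* Let $d\ge1$, $\alpha\in\mathbb{N}$, let $H=(V,E)$ be a $d$-hypergraph with maximum degree $\Delta$ and let $w\colon E\to\mathbb{Z}$. Suppose that $H$ has no isolated vertex (every vertex lies in some edge), that $w(e)\neq0$ for every $e\in E$, and that $|V|\ge 2\alpha\, d^3\Delta^2$. Then there is a set $X\subseteq V$ with $|w[X]|\ge\alpha$.
   Context: A $d$-hypergraph $H=(V,E)$ has a vertex set $V$ and a set $E$ of edges, each $e\subseteq V$ with $|e|\le d$ (the empty set may be an edge). The degree of a vertex is the number of edges containing it; $\Delta$ is the maximum degree. For $X\subseteq V$, $E[X]=\{e\in E: e\subseteq X\}$ and $w[X]=\sum_{e\in E[X]}w(e)$. *)

theory Defs
  imports Main
begin

definition hypergraph :: "nat \<Rightarrow> 'a set \<Rightarrow> 'a set set \<Rightarrow> bool" where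
  "hypergraph d V E \<longleftrightarrow> finite V \<and> (\<forall>e\<in>E. e \<subseteq> V \<and> card e \<le> d)"

definition vdegree :: "'a set set \<Rightarrow> 'a \<Rightarrow> nat" where
  "vdegree E v = card {e \<in> E. v \<in> e}"

definition max_degree :: "'a set \<Rightarrow> 'a set set \<Rightarrow> nat" where
  "max_degree V E = Max ((vdegree E) ` V)"

definition wsum :: "'a set set \<Rightarrow> ('a set \<Rightarrow> int) \<Rightarrow> 'a set \<Rightarrow> int" where
  "wsum E w X = (\<Sum>e\<in>{e \<in> E. e \<subseteq> X}. w e)"

end

theory Submission
  imports Defs
begin

text \<open>Greedily pick nonempty, inclusion-minimal edges that are pairwise far apart: no edge
  meets two of them. Every new pick only has to avoid the second edge-neighbourhood of the
  previous ones, which has at most \<open>d\<^sup>3\<Delta>\<^sup>2\<close> vertices per picked edge, so \<open>2\<alpha>\<close> such edges exist.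
  For any subfamily \<open>T\<close> of them, the edges inside \<open>\<Union>T\<close> are exactly \<open>T\<close> and possibly the empty
  edge, so \<open>w[\<Union>T] = w[{}] + \<Sum>T w\<close>. Taking for \<open>T\<close> the positive and the negative picks gives
  two values differing by at least \<open>2\<alpha>\<close>, so one of them has absolute value at least \<open>\<alpha>\<close>.\<close>

definition edge_nbhd :: "'a set set \<Rightarrow> 'a set \<Rightarrow> 'a set" where
  "edge_nbhd E A = \<Union>{g \<in> E. g \<inter> A \<noteq> {}}"

definition minimal_edge :: "'a set set \<Rightarrow> 'a set \<Rightarrow> bool" where
  "minimal_edge E e \<longleftrightarrow> e \<in> E \<and> e \<noteq> {} \<and> (\<forall>f\<in>E. f \<noteq> {} \<longrightarrow> f \<subseteq> e \<longrightarrow> f = e)"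

definition scattered :: "'a set set \<Rightarrow> 'a set set \<Rightarrow> bool" where
  "scattered E S \<longleftrightarrow> (\<forall>e\<in>S. minimal_edge E e)
     \<and> (\<forall>e1\<in>S. \<forall>e2\<in>S. e1 \<noteq> e2 \<longrightarrow> (\<forall>g\<in>E. g \<inter> e1 = {} \<or> g \<inter> e2 = {}))"

lemma scattered_subset: "scattered E S \<Longrightarrow> S \<subseteq> E"
  by (auto simp: scattered_def minimal_edge_def)

lemma scattered_eqI:
  assumes "scattered E S" "e1 \<in> S" "e2 \<in> S" "g \<in> E" "x \<in> g \<inter> e1" "y \<in> g \<inter> e2"
  shows "e1 = e2"
proof (rule ccontr)
  assume "e1 \<noteq> e2"
  with assms(1-4) have "g \<inter> e1 = {} \<or> g \<inter> e2 = {}" unfolding scattered_def by simp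
  with assms(5,6) show False by blast
qed

lemma card_Union_le_card_mult:
  assumes "\<And>a. a \<in> A \<Longrightarrow> card a \<le> d"
  shows "card (\<Union>A) \<le> card A * d"
proof -
  have "card (\<Union>A) \<le> sum card A" by (rule card_Union_le_sum_card)
  also have "\<dots> \<le> card A * d" using sum_bounded_above[of A card d] assms by simp
  finally show ?thesis .
qed

lemma finite_edges_if_hypergraph: "hypergraph d V E \<Longrightarrow> finite E"
  unfolding hypergraph_def by (meson PowI finite_Pow_iff rev_finite_subset subsetI)

lemma vdegree_le_max_degree: "finite V \<Longrightarrow> x \<in> V \<Longrightarrow> vdegree E x \<le> max_degree V E"
  unfolding max_degree_def by simp

lemma edge_nbhd_subset: "hypergraph d V E \<Longrightarrow> edge_nbhd E A \<subseteq> V"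
  unfolding hypergraph_def edge_nbhd_def by blast

lemma card_edge_nbhd_le:
  assumes h: "hypergraph d V E" and A: "A \<subseteq> V"
  shows "card (edge_nbhd E A) \<le> card A * (max_degree V E * d)"
proof -
  have fV: "finite V" using h unfolding hypergraph_def by simp
  have "edge_nbhd E A = (\<Union>x\<in>A. \<Union>{g\<in>E. x \<in> g})" unfolding edge_nbhd_def by blast
  also have "card \<dots> \<le> (\<Sum>x\<in>A. card (\<Union>{g\<in>E. x \<in> g}))"
    using A fV by (intro card_UN_le) (rule finite_subset)
  also have "\<dots> \<le> (\<Sum>x\<in>A. max_degree V E * d)"
  proof (rule sum_mono)
    fix x assume "x \<in> A"
    have "card (\<Union>{g\<in>E. x \<in> g}) \<le> vdegree E x * d"
      unfolding vdegree_def using h by (intro card_Union_le_card_mult) (auto simp: hypergraph_def)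
    also have "\<dots> \<le> max_degree V E * d"
      using vdegree_le_max_degree[OF fV] \<open>x \<in> A\<close> A by auto
    finally show "card (\<Union>{g\<in>E. x \<in> g}) \<le> max_degree V E * d" .
  qed
  finally show ?thesis by simp
qed

lemma minimal_edge_below:
  assumes "finite E" "f \<in> E" "f \<noteq> {}"
  obtains e where "minimal_edge E e" "e \<subseteq> f"
proof -
  obtain e where "e \<in> {g \<in> E. g \<noteq> {}}" "e \<subseteq> f"
    and "\<forall>g \<in> {g \<in> E. g \<noteq> {}}. g \<subseteq> e \<longrightarrow> e = g"
    using finite_has_minimal2[of "{g \<in> E. g \<noteq> {}}" f] assms by auto
  then have "minimal_edge E e" unfolding minimal_edge_def by auto
  with \<open>e \<subseteq> f\<close> show ?thesis using that by blast
qed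

lemma scattered_insert:
  assumes S: "scattered E S" and e: "minimal_edge E e"
    and far: "\<forall>g\<in>E. g \<inter> e = {} \<or> g \<inter> \<Union>S = {}"
  shows "scattered E (insert e S)" "e \<notin> S"
proof -
  show "e \<notin> S"
    using far e unfolding minimal_edge_def by blast
  have "g \<inter> e1 = {} \<or> g \<inter> e2 = {}"
    if "e1 \<in> insert e S" "e2 \<in> insert e S" "e1 \<noteq> e2" "g \<in> E" for e1 e2 g
    using that S far unfolding scattered_def by blast
  with S e show "scattered E (insert e S)" unfolding scattered_def by blast
qed

lemma minimal_edge_far_from:
  assumes "finite E" "f \<in> E" "v \<in> f" "v \<notin> edge_nbhd E (edge_nbhd E B)"
  obtains e where "minimal_edge E e" "\<forall>g\<in>E. g \<inter> e = {} \<or> g \<inter> B = {}"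
proof -
  obtain e where e: "minimal_edge E e" "e \<subseteq> f"
    using minimal_edge_below assms(1-3) by blast
  have "g \<inter> e = {} \<or> g \<inter> B = {}" if "g \<in> E" for g
  proof (rule ccontr)
    assume "\<not> ?thesis"
    then have "f \<inter> edge_nbhd E B \<noteq> {}"
      using that e(2) unfolding edge_nbhd_def by blast
    then show False using assms(2-4) unfolding edge_nbhd_def by blast
  qed
  with e(1) show ?thesis using that by blast
qed

lemma card_second_edge_nbhd_le:
  assumes h: "hypergraph d V E" and S: "scattered E S"
  shows "card (edge_nbhd E (edge_nbhd E (\<Union>S))) \<le> card S * d ^ 3 * max_degree V E ^ 2"
proof -
  let ?\<Delta> = "max_degree V E"
  have "\<Union>S \<subseteq> V" "\<forall>e\<in>S. card e \<le> d"
    using scattered_subset[OF S] h unfolding hypergraph_def by blast+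
  then have "card (\<Union>S) \<le> card S * d" using card_Union_le_card_mult[of S d] by simp
  have "card (edge_nbhd E (edge_nbhd E (\<Union>S))) \<le> card (edge_nbhd E (\<Union>S)) * (?\<Delta> * d)"
    by (rule card_edge_nbhd_le[OF h edge_nbhd_subset[OF h]])
  also have "\<dots> \<le> card (\<Union>S) * (?\<Delta> * d) * (?\<Delta> * d)"
    using card_edge_nbhd_le[OF h \<open>\<Union>S \<subseteq> V\<close>] by simp
  also have "\<dots> \<le> card S * d * (?\<Delta> * d) * (?\<Delta> * d)"
    using \<open>card (\<Union>S) \<le> card S * d\<close> by simp
  also have "\<dots> = card S * d ^ 3 * ?\<Delta> ^ 2"
    by (simp add: power2_eq_square power3_eq_cube mult_ac)
  finally show ?thesis .
qed

lemma exists_scattered_card: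
  assumes h: "hypergraph d V E" and cov: "\<forall>v\<in>V. \<exists>e\<in>E. v \<in> e" and ne: "V \<noteq> {}"
    and "k * d ^ 3 * max_degree V E ^ 2 \<le> card V"
  shows "\<exists>S. scattered E S \<and> card S = k"
  using assms(4)
proof (induction k)
  case 0
  show ?case by (rule exI[of _ "{}"]) (simp add: scattered_def)
next
  case (Suc k)
  let ?D = "d ^ 3 * max_degree V E ^ 2"
  have fV: "finite V" and fE: "finite E"
    using h finite_edges_if_hypergraph[OF h] unfolding hypergraph_def by simp_all
  have "k * d ^ 3 * max_degree V E ^ 2 \<le> card V"
    using Suc.prems by (rule order_trans[rotated]) simp
  with Suc.IH obtain S where S: "scattered E S" "card S = k" by auto
  let ?B = "edge_nbhd E (edge_nbhd E (\<Union>S))"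
  have "card ?B \<le> k * ?D"
    using card_second_edge_nbhd_le[OF h S(1)] S(2) by (simp add: mult.assoc)
  also have "\<dots> < card V"
  proof (cases "?D = 0")
    case True
    have "card V > 0" using ne fV by (simp add: card_gt_0_iff)
    then show ?thesis by (simp only: True mult_0_right)
  next
    case False
    moreover have "k * ?D + ?D \<le> card V" using Suc.prems by (simp add: algebra_simps)
    ultimately show ?thesis by linarith
  qed
  finally have "card ?B < card V" .
  moreover have "finite ?B" using finite_subset[OF edge_nbhd_subset[OF h] fV] .
  ultimately have "\<not> V \<subseteq> ?B" using card_mono[of ?B V] by linarith
  then obtain v f where "v \<in> f" "f \<in> E" "v \<notin> ?B" using cov by blast
  then obtain e where "minimal_edge E e" "\<forall>g\<in>E. g \<inter> e = {} \<or> g \<inter> \<Union>S = {}"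
    using minimal_edge_far_from[OF fE] by blast
  note ins = scattered_insert[OF S(1) this]
  have "finite S" using scattered_subset[OF S(1)] fE by (rule finite_subset)
  then have "card (insert e S) = Suc k" using ins(2) S(2) by simp
  with ins(1) show ?case by blast
qed

lemma edges_within_Union_scattered:
  assumes S: "scattered E S" and T: "T \<subseteq> S"
  shows "{e \<in> E. e \<subseteq> \<Union>T} = T \<union> {e \<in> E. e \<subseteq> {}}"
proof
  show "T \<union> {e \<in> E. e \<subseteq> {}} \<subseteq> {e \<in> E. e \<subseteq> \<Union>T}"
    using scattered_subset[OF S] T by auto
next
  show "{e \<in> E. e \<subseteq> \<Union>T} \<subseteq> T \<union> {e \<in> E. e \<subseteq> {}}"
  proof
    fix e assume e: "e \<in> {e \<in> E. e \<subseteq> \<Union>T}"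
    show "e \<in> T \<union> {e \<in> E. e \<subseteq> {}}"
    proof (cases "e = {}")
      case False
      then obtain x t where "x \<in> e" "t \<in> T" "x \<in> t" using e by blast
      have "e \<subseteq> t"
      proof
        fix y assume "y \<in> e"
        then obtain t' where "t' \<in> T" "y \<in> t'" using e by blast
        then have "t' = t"
          using scattered_eqI[OF S, of t' t e y x] T \<open>t \<in> T\<close> e \<open>x \<in> e\<close> \<open>x \<in> t\<close> \<open>y \<in> e\<close>
          by blast
        then show "y \<in> t" using \<open>y \<in> t'\<close> by simp
      qed
      moreover have "minimal_edge E t" using S T \<open>t \<in> T\<close> unfolding scattered_def by blast
      ultimately have "e = t" using e False unfolding minimal_edge_def by blast
      then show ?thesis using \<open>t \<in> T\<close> by simp
    qed (use e in simp)
  qed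
qed

lemma wsum_Union_scattered:
  assumes "finite E" "scattered E S" "T \<subseteq> S"
  shows "wsum E w (\<Union>T) = wsum E w {} + sum w T"
proof -
  have "T \<subseteq> E" using scattered_subset[OF assms(2)] assms(3) by blast
  moreover have "\<forall>t\<in>T. t \<noteq> {}" using assms(2,3) by (auto simp: scattered_def minimal_edge_def)
  ultimately have "finite T" "T \<inter> {e \<in> E. e \<subseteq> {}} = {}"
    using assms(1) finite_subset by auto
  then show ?thesis
    unfolding wsum_def edges_within_Union_scattered[OF assms(2,3)]
    using assms(1) by (simp add: sum.union_disjoint)
qed

lemma exists_subset_abs_sum_ge:
  fixes w :: "'b \<Rightarrow> int"
  assumes "finite S" "card S = 2 * \<alpha>" "\<forall>e\<in>S. w e \<noteq> 0"
  shows "\<exists>T \<subseteq> S. \<bar>c + sum w T\<bar> \<ge> int \<alpha>"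
proof -
  define P where "P = {e \<in> S. w e > 0}"
  define N where "N = {e \<in> S. w e < 0}"
  have "S = P \<union> N" "P \<inter> N = {}"
    using assms(3) unfolding P_def N_def by (auto simp: neq_iff)
  then have "card P + card N = 2 * \<alpha>"
    using assms(1,2) card_Un_disjoint[of P N] by (metis finite_Un)
  moreover have "sum w P \<ge> int (card P)"
    using sum_mono[of P "\<lambda>_. 1" w] unfolding P_def by auto
  moreover have "sum w N \<le> - int (card N)"
    using sum_mono[of N w "\<lambda>_. -1"] unfolding N_def by auto
  ultimately have "\<bar>c + sum w P\<bar> \<ge> int \<alpha> \<or> \<bar>c + sum w N\<bar> \<ge> int \<alpha>"
    by linarith
  moreover have "P \<subseteq> S" "N \<subseteq> S" unfolding P_def N_def by auto
  ultimately show ?thesis by blast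
qed

theorem lemma9:
  fixes d \<alpha> :: nat and V :: "'a set" and E :: "'a set set" and w :: "'a set \<Rightarrow> int"
  assumes "d \<ge> 1"
    and "hypergraph d V E"
    and "V \<noteq> {}"
    and "\<forall>v\<in>V. \<exists>e\<in>E. v \<in> e"
    and "\<forall>e\<in>E. w e \<noteq> 0"
    and "card V \<ge> 2 * \<alpha> * d ^ 3 * (max_degree V E) ^ 2"
  shows "\<exists>X \<subseteq> V. \<bar>wsum E w X\<bar> \<ge> int \<alpha>"
proof -
  have fE: "finite E" using finite_edges_if_hypergraph[OF assms(2)] .
  obtain S where S: "scattered E S" "card S = 2 * \<alpha>"
    using exists_scattered_card[OF assms(2,4,3,6)] by blast
  have "S \<subseteq> E" using scattered_subset[OF S(1)] .
  then have "finite S" "\<forall>e\<in>S. w e \<noteq> 0" using fE assms(5) finite_subset by auto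
  then obtain T where T: "T \<subseteq> S" "\<bar>wsum E w {} + sum w T\<bar> \<ge> int \<alpha>"
    using exists_subset_abs_sum_ge[of S \<alpha> w "wsum E w {}"] S(2) by blast
  have "\<Union>T \<subseteq> V" using T(1) \<open>S \<subseteq> E\<close> assms(2) unfolding hypergraph_def by blast
  moreover have "wsum E w (\<Union>T) = wsum E w {} + sum w T"
    using wsum_Union_scattered[OF fE S(1) T(1)] .
  ultimately show ?thesis using T(2) by metis
qed

end
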